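(* The minimum singular value $\sigma_{\min}$ of $UP_K$ satisfies $$\sigma_{\min}\ge\inf_{\substack{y\in\mathbb C^N\\ \|y\|=1}}\ \sup_{g\in G_y}\ \sup_{\substack{\phi\in\Phi_K\\ \phi\ne0}}\left\{\frac{1-\|g-\phi\|_{\infty}}{\|g\|_\nu+\|g-\phi\|_\infty}\right\},$$ where $\Phi_K=\mathrm{span}\{\phi_1,\dots,\phi_K\}$ and $G_y=\{g\in L^2_\nu(D)\cap L^\infty(D): g(t_n)=y_n/\sqrt{\tau_n},\ n=1,\dots,N\}$.
   Context: Setting: $D\subseteq\mathbb R^d$ a domain, $\nu\ge0$ integrable on $D$ with $\int_D\nu=1$, $\{\phi_i\}_{i\in\mathbb N}\subseteq L^2_\nu(D)\cap L^\infty(D)$ orthonormal in $L^2_\nu(D)$. $T=\{t_n\}_{n=1}^N\subseteq\overline D$ with Voronoi cells $V_n=\{t\in D:|t-t_n|\le|t-t_m|\ \forall m\ne n\}$ and quadrature weights $\tau_n=\int_{V_n}\nu$ (assumed positive so that $G_y$ is defined). $U$ is the $N\times\infty$ matrix $U_{n,i}=\sqrt{\tau_n}\phi_i(t_n)$, $P_K$ the projection onto the first $K$ coordinates, and $\sigma_{\min}=\inf_{y\in\mathbb C^N,\|y\|=1}\|(UP_K)^*y\|$. $\|g\|_\nu$ is the $L^2_\nu(D)$ norm and $\|\cdot\|_\infty$ the uniform norm on $D$. *)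

theory Defs
  imports "HOL-Analysis.Analysis"
begin

definition L2nu :: "'a::euclidean_space set \<Rightarrow> ('a \<Rightarrow> real) \<Rightarrow> ('a \<Rightarrow> complex) set" where
  "L2nu D \<nu> = {f. set_borel_measurable lebesgue D f \<and>
                   set_integrable lebesgue D (\<lambda>t. \<nu> t * (cmod (f t))\<^sup>2)}"

definition Linf :: "'a::euclidean_space set \<Rightarrow> ('a \<Rightarrow> complex) set" where
  "Linf D = {f. set_borel_measurable lebesgue D f \<and>
                (\<exists>B. AE t in lebesgue. t \<in> D \<longrightarrow> cmod (f t) \<le> B)}"

definition nu_inner :: "'a::euclidean_space set \<Rightarrow> ('a \<Rightarrow> real) \<Rightarrow> ('a \<Rightarrow> complex) \<Rightarrow> ('a \<Rightarrow> complex) \<Rightarrow> complex" where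
  "nu_inner D \<nu> f g = (LINT t:D|lebesgue. complex_of_real (\<nu> t) * (f t * cnj (g t)))"

definition nu_norm :: "'a::euclidean_space set \<Rightarrow> ('a \<Rightarrow> real) \<Rightarrow> ('a \<Rightarrow> complex) \<Rightarrow> real" where
  "nu_norm D \<nu> f = sqrt (LINT t:D|lebesgue. \<nu> t * (cmod (f t))\<^sup>2)"

definition unorm :: "'a set \<Rightarrow> ('a \<Rightarrow> complex) \<Rightarrow> real" where
  "unorm S f = (SUP t\<in>S. cmod (f t))"

definition voronoi :: "'a::euclidean_space set \<Rightarrow> nat \<Rightarrow> (nat \<Rightarrow> 'a) \<Rightarrow> nat \<Rightarrow> 'a set" where
  "voronoi D N t n = {s \<in> D. \<forall>m<N. m \<noteq> n \<longrightarrow> dist s (t n) \<le> dist s (t m)}"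

definition qweight :: "'a::euclidean_space set \<Rightarrow> ('a \<Rightarrow> real) \<Rightarrow> nat \<Rightarrow> (nat \<Rightarrow> 'a) \<Rightarrow> nat \<Rightarrow> real" where
  "qweight D \<nu> N t n = (LINT s:voronoi D N t n|lebesgue. \<nu> s)"

definition Umat :: "'a::euclidean_space set \<Rightarrow> ('a \<Rightarrow> real) \<Rightarrow> nat \<Rightarrow> (nat \<Rightarrow> 'a) \<Rightarrow> (nat \<Rightarrow> 'a \<Rightarrow> complex) \<Rightarrow> nat \<Rightarrow> nat \<Rightarrow> complex" where
  "Umat D \<nu> N t \<phi> n i = complex_of_real (sqrt (qweight D \<nu> N t n)) * \<phi> i (t n)"

text \<open>Euclidean norm of (U P_K)^* y; its nonzero components are indexed by i < K.\<close>
definition adj_norm :: "'a::euclidean_space set \<Rightarrow> ('a \<Rightarrow> real) \<Rightarrow> nat \<Rightarrow> (nat \<Rightarrow> 'a) \<Rightarrow> (nat \<Rightarrow> 'a \<Rightarrow> complex) \<Rightarrow> nat \<Rightarrow> (nat \<Rightarrow> complex) \<Rightarrow> real" where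
  "adj_norm D \<nu> N t \<phi> K y =
     sqrt (\<Sum>i<K. (cmod (\<Sum>n<N. cnj (Umat D \<nu> N t \<phi> n i) * y n))\<^sup>2)"

definition unit_sphere :: "nat \<Rightarrow> (nat \<Rightarrow> complex) set" where
  "unit_sphere N = {y. sqrt (\<Sum>n<N. (cmod (y n))\<^sup>2) = 1}"

definition sigma_min :: "'a::euclidean_space set \<Rightarrow> ('a \<Rightarrow> real) \<Rightarrow> nat \<Rightarrow> (nat \<Rightarrow> 'a) \<Rightarrow> (nat \<Rightarrow> 'a \<Rightarrow> complex) \<Rightarrow> nat \<Rightarrow> ereal" where
  "sigma_min D \<nu> N t \<phi> K = (INF y\<in>unit_sphere N. ereal (adj_norm D \<nu> N t \<phi> K y))"

definition PhiK :: "(nat \<Rightarrow> 'a \<Rightarrow> complex) \<Rightarrow> nat \<Rightarrow> ('a \<Rightarrow> complex) set" where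
  "PhiK \<phi> K = {(\<lambda>s. \<Sum>i<K. c i * \<phi> i s) | c. True}"

definition Gset :: "'a::euclidean_space set \<Rightarrow> ('a \<Rightarrow> real) \<Rightarrow> nat \<Rightarrow> (nat \<Rightarrow> 'a) \<Rightarrow> (nat \<Rightarrow> complex) \<Rightarrow> ('a \<Rightarrow> complex) set" where
  "Gset D \<nu> N t y = {g. g \<in> L2nu D \<nu> \<and> g \<in> Linf D \<and>
      (\<forall>n<N. g (t n) = y n / complex_of_real (sqrt (qweight D \<nu> N t n)))}"

text \<open>The quantity inside the suprema. Only pairs with g - phi bounded on closure D are
  considered (the uniform norm must be finite for the fraction to make sense).\<close>
definition ratio :: "'a::euclidean_space set \<Rightarrow> ('a \<Rightarrow> real) \<Rightarrow> ('a \<Rightarrow> complex) \<Rightarrow> ('a \<Rightarrow> complex) \<Rightarrow> real" where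
  "ratio D \<nu> g p = (1 - unorm (closure D) (\<lambda>s. g s - p s)) /
                    (nu_norm D \<nu> g + unorm (closure D) (\<lambda>s. g s - p s))"

end

theory Submission
  imports Defs
begin

text \<open>Fix a unit vector \<open>y\<close>, an interpolant \<open>g \<in> G\<^sub>y\<close> and \<open>p = \<Sum>i<K. c\<^sub>i \<phi>\<^sub>i\<close>, and put
  \<open>\<epsilon> = \<parallel>g - p\<parallel>\<^sub>\<infinity>\<close>. Pairing \<open>(U P\<^sub>K)\<^sup>* y\<close> with \<open>c\<close> gives \<open>\<Sum>n. y\<^sub>n \<surd>\<tau>\<^sub>n conj (p(t\<^sub>n))\<close>; replacing
  \<open>p(t\<^sub>n)\<close> by \<open>g(t\<^sub>n) = y\<^sub>n / \<surd>\<tau>\<^sub>n\<close> turns this sum into \<open>1\<close>, at a cost of at most \<open>\<epsilon>\<close> by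
  Cauchy-Schwarz, because \<open>\<Sum>n. \<tau>\<^sub>n \<le> \<integral>\<nu> = 1\<close> (distinct Voronoi cells meet only in null sets).
  Hence \<open>1 - \<epsilon> \<le> \<parallel>(U P\<^sub>K)\<^sup>* y\<parallel> \<parallel>c\<parallel>\<close>, while orthonormality gives
  \<open>\<parallel>c\<parallel> = \<parallel>p\<parallel>\<^sub>\<nu> \<le> \<parallel>g\<parallel>\<^sub>\<nu> + \<epsilon>\<close>.\<close>

lemma power2_add_le_weighted:
  fixes u v l :: real
  assumes "l > 0"
  shows "(u + v)\<^sup>2 \<le> (1 + l) * u\<^sup>2 + (1 + 1 / l) * v\<^sup>2"
proof -
  have "0 \<le> (l * u - v)\<^sup>2 / l" using assms by simp
  also have "\<dots> = (1 + l) * u\<^sup>2 + (1 + 1 / l) * v\<^sup>2 - (u + v)\<^sup>2"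
    using assms by (simp add: field_simps power2_eq_square)
  finally show ?thesis by simp
qed

lemma power2_norm_diff_le_weighted:
  fixes a b :: "'a::real_normed_vector" and l :: real
  assumes "l > 0"
  shows "(norm (a - b))\<^sup>2 \<le> (1 + l) * (norm a)\<^sup>2 + (1 + 1 / l) * (norm b)\<^sup>2"
  using power_mono[OF norm_triangle_ineq4 norm_ge_zero] power2_add_le_weighted[OF assms]
  by (rule order_trans)

text \<open>The choice \<open>l = b/a\<close> is optimal; perturbing \<open>a, b\<close> to \<open>a + d, b + d\<close> avoids the
  degenerate cases \<open>a = 0\<close> and \<open>b = 0\<close>.\<close>
lemma le_power2_add_if_weighted_bounds:
  fixes X a b :: real
  assumes bound: "\<And>l. l > 0 \<Longrightarrow> X \<le> (1 + l) * a\<^sup>2 + (1 + 1 / l) * b\<^sup>2"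
    and a: "0 \<le> a" and b: "0 \<le> b"
  shows "X \<le> (a + b)\<^sup>2"
proof (rule ccontr)
  assume "\<not> X \<le> (a + b)\<^sup>2"
  then have gt: "a + b < sqrt X"
    by (simp add: real_less_rsqrt)
  then have X: "0 < X"
    using a b by (metis add_nonneg_nonneg le_less_trans real_sqrt_gt_0_iff)
  define d where "d = (sqrt X - (a + b)) / 4"
  have d: "d > 0" using gt by (simp add: d_def)
  define l where "l = (b + d) / (a + d)"
  have l: "l > 0" using a b d by (simp add: l_def)
  have "X \<le> (1 + l) * a\<^sup>2 + (1 + 1 / l) * b\<^sup>2" by (rule bound[OF l])
  also have "\<dots> \<le> (1 + l) * (a + d)\<^sup>2 + (1 + 1 / l) * (b + d)\<^sup>2"
    using a b d l by (intro add_mono mult_left_mono power_mono) auto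
  also have "\<dots> = (a + b + 2 * d)\<^sup>2"
  proof -
    have "(1 + l) * (a + d)\<^sup>2 = (a + d)\<^sup>2 + (b + d) * (a + d)"
      using a d by (simp add: l_def field_simps power2_eq_square)
    moreover have "(1 + 1 / l) * (b + d)\<^sup>2 = (b + d)\<^sup>2 + (a + d) * (b + d)"
      using b d by (simp add: l_def field_simps power2_eq_square)
    ultimately show ?thesis by (simp add: power2_eq_square algebra_simps)
  qed
  also have "\<dots> < (sqrt X)\<^sup>2"
    using a b d gt by (intro power_strict_mono) (auto simp: d_def field_simps)
  also have "\<dots> = X"
    using X by simp
  finally show False by simp
qed

lemma norm_sum_sqrt_weighted_le:
  fixes y d :: "nat \<Rightarrow> complex" and \<tau> :: "nat \<Rightarrow> real"
  assumes y: "(\<Sum>n<N. (cmod (y n))\<^sup>2) = 1"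
    and \<tau>_nonneg: "\<forall>n<N. 0 \<le> \<tau> n" and \<tau>_sum: "(\<Sum>n<N. \<tau> n) \<le> 1"
    and d: "\<forall>n<N. cmod (d n) \<le> e" and e: "0 \<le> e"
  shows "cmod (\<Sum>n<N. y n * complex_of_real (sqrt (\<tau> n)) * d n) \<le> e"
proof -
  have "cmod (\<Sum>n<N. y n * complex_of_real (sqrt (\<tau> n)) * d n)
      \<le> (\<Sum>n<N. cmod (y n) * sqrt (\<tau> n) * e)"
    using d \<tau>_nonneg
    by (intro order_trans[OF norm_sum] sum_mono) (auto simp: norm_mult intro!: mult_left_mono)
  also have "\<dots> = e * (\<Sum>n<N. \<bar>cmod (y n)\<bar> * \<bar>sqrt (\<tau> n)\<bar>)"
    using \<tau>_nonneg by (auto simp: sum_distrib_left mult_ac intro!: sum.cong)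
  also have "\<dots> \<le> e * (L2_set (\<lambda>n. cmod (y n)) {..<N} * L2_set (\<lambda>n. sqrt (\<tau> n)) {..<N})"
    by (intro mult_left_mono L2_set_mult_ineq e)
  also have "\<dots> \<le> e"
  proof -
    have "L2_set (\<lambda>n. cmod (y n)) {..<N} = 1"
      using y by (simp add: L2_set_def)
    moreover have "(\<Sum>n<N. (sqrt (\<tau> n))\<^sup>2) = (\<Sum>n<N. \<tau> n)"
      using \<tau>_nonneg by (intro sum.cong) auto
    then have "L2_set (\<lambda>n. sqrt (\<tau> n)) {..<N} \<le> 1"
      using \<tau>_sum by (simp add: L2_set_def)
    ultimately show ?thesis using e by (simp add: mult_left_le)
  qed
  finally show ?thesis .
qed

text \<open>Here \<open>b i n\<close> stands for \<open>\<phi>\<^sub>i(t\<^sub>n)\<close> and \<open>g n\<close> for \<open>g(t\<^sub>n)\<close>.\<close>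
lemma sampled_adjoint_lower_bound:
  fixes y c g :: "nat \<Rightarrow> complex" and \<tau> :: "nat \<Rightarrow> real" and b :: "nat \<Rightarrow> nat \<Rightarrow> complex"
  assumes y: "(\<Sum>n<N. (cmod (y n))\<^sup>2) = 1"
    and \<tau>_pos: "\<forall>n<N. 0 < \<tau> n" and \<tau>_sum: "(\<Sum>n<N. \<tau> n) \<le> 1"
    and g: "\<forall>n<N. g n = y n / complex_of_real (sqrt (\<tau> n))"
    and err: "\<forall>n<N. cmod (g n - (\<Sum>i<K. c i * b i n)) \<le> e" and e: "0 \<le> e"
  shows "1 - e \<le> sqrt (\<Sum>i<K. (cmod (\<Sum>n<N. cnj (complex_of_real (sqrt (\<tau> n)) * b i n) * y n))\<^sup>2)
                   * L2_set (\<lambda>i. cmod (c i)) {..<K}"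
proof -
  define s where "s n = complex_of_real (sqrt (\<tau> n))" for n
  define p where "p n = (\<Sum>i<K. c i * b i n)" for n
  define w where "w i = (\<Sum>n<N. cnj (s n * b i n) * y n)" for i
  have s_real: "cnj (s n) = s n" for n
    by (simp add: s_def)
  have pairing: "(\<Sum>i<K. w i * cnj (c i)) = (\<Sum>n<N. y n * s n * cnj (p n))"
    by (simp add: w_def p_def s_real sum_distrib_right sum_distrib_left cnj_sum
        sum.swap[where A = "{..<K}"] mult_ac)
  have "y n * s n * cnj (g n) = complex_of_real ((cmod (y n))\<^sup>2)" if "n < N" for n
  proof -
    have "s n \<noteq> 0" using \<tau>_pos that by (auto simp: s_def)
    then have "s n * cnj (g n) = cnj (y n)"
      using g that by (simp add: s_def)
    then show ?thesis by (metis complex_norm_square mult.assoc)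
  qed
  then have "(\<Sum>n<N. y n * s n * cnj (g n)) = complex_of_real (\<Sum>n<N. (cmod (y n))\<^sup>2)"
    unfolding of_real_sum by (intro sum.cong) auto
  then have interpolation: "(\<Sum>n<N. y n * s n * cnj (g n)) = 1"
    using y by simp
  have "cmod (\<Sum>n<N. y n * s n * cnj (g n - p n)) \<le> e"
    unfolding s_def using y \<tau>_pos \<tau>_sum err e
    by (intro norm_sum_sqrt_weighted_le) (auto simp: p_def less_imp_le simp del: complex_cnj_diff)
  moreover have "1 = (\<Sum>n<N. y n * s n * cnj (p n)) + (\<Sum>n<N. y n * s n * cnj (g n - p n))"
    unfolding interpolation[symmetric] by (simp add: algebra_simps sum.distrib[symmetric])
  then have "1 \<le> cmod (\<Sum>n<N. y n * s n * cnj (p n)) + cmod (\<Sum>n<N. y n * s n * cnj (g n - p n))"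
    by (metis norm_one norm_triangle_ineq)
  ultimately have "1 - e \<le> cmod (\<Sum>i<K. w i * cnj (c i))"
    unfolding pairing by linarith
  also have "\<dots> \<le> (\<Sum>i<K. \<bar>cmod (w i)\<bar> * \<bar>cmod (c i)\<bar>)"
    by (rule order_trans[OF norm_sum]) (simp add: norm_mult)
  also have "\<dots> \<le> L2_set (\<lambda>i. cmod (w i)) {..<K} * L2_set (\<lambda>i. cmod (c i)) {..<K}"
    by (rule L2_set_mult_ineq)
  finally show ?thesis by (simp add: L2_set_def w_def s_def)
qed

lemma null_sets_equidistant:
  fixes a b :: "'a::euclidean_space"
  assumes "a \<noteq> b"
  shows "{x. dist x a = dist x b} \<in> null_sets lebesgue"
proof -
  have "dist x a = dist x b \<longleftrightarrow> (2 *\<^sub>R (b - a)) \<bullet> x = b \<bullet> b - a \<bullet> a" for x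
  proof -
    have "dist x a = dist x b \<longleftrightarrow> (x - a) \<bullet> (x - a) = (x - b) \<bullet> (x - b)"
      by (simp add: dist_norm power2_norm_eq_inner[symmetric])
    also have "\<dots> \<longleftrightarrow> (2 *\<^sub>R (b - a)) \<bullet> x = b \<bullet> b - a \<bullet> a"
      by (simp add: inner_diff_left inner_diff_right inner_commute[of x a] inner_commute[of x b])
        linarith
    finally show ?thesis .
  qed
  moreover have "negligible {x. (2 *\<^sub>R (b - a)) \<bullet> x = b \<bullet> b - a \<bullet> a}"
    using assms by (intro negligible_hyperplane) simp
  ultimately show ?thesis by (simp add: negligible_iff_null_sets)
qed

lemma voronoi_in_sets_lebesgue:
  assumes "D \<in> sets lebesgue"
  shows "voronoi D N t n \<in> sets lebesgue"
proof -
  let ?H = "{s. \<forall>m<N. m \<noteq> n \<longrightarrow> dist s (t n) \<le> dist s (t m)}"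
  have "closed ?H"
    by (intro closed_Collect_all closed_Collect_imp closed_Collect_le) (auto intro!: continuous_intros)
  then have "?H \<in> sets lborel" by simp
  then have "?H \<in> sets lebesgue" by (rule sets_completionI_sets)
  moreover have "voronoi D N t n = D \<inter> ?H"
    by (auto simp: voronoi_def)
  ultimately show ?thesis using assms by (simp add: sets.Int)
qed

lemma sum_indicator_voronoi_le:
  assumes "x \<notin> (\<Union>n<N. \<Union>m\<in>{..<N} - {n}. {s. dist s (t n) = dist s (t m)})"
  shows "(\<Sum>n<N. indicator (voronoi D N t n) x) \<le> (indicator D x :: real)"
proof (cases "\<exists>n<N. x \<in> voronoi D N t n")
  case True
  then obtain n where n: "n < N" "x \<in> voronoi D N t n" by blast
  have "x \<notin> voronoi D N t m" if "m < N" "m \<noteq> n" for m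
    using assms n that by (force simp: voronoi_def)
  then have "(\<Sum>m<N. indicator (voronoi D N t m) x) = (indicator (voronoi D N t n) x :: real)"
    using n by (subst sum.mono_neutral_right[where S = "{n}"]) auto
  then show ?thesis using n by (simp add: voronoi_def indicator_def)
next
  case False
  then show ?thesis by (simp add: indicator_def)
qed

lemma sum_qweight_le:
  fixes D :: "'a::euclidean_space set"
  assumes D: "D \<in> sets lebesgue" and \<nu>_nonneg: "\<forall>s\<in>D. 0 \<le> \<nu> s"
    and \<nu>_int: "set_integrable lebesgue D \<nu>" and t_inj: "inj_on t {..<N}"
  shows "(\<Sum>n<N. qweight D \<nu> N t n) \<le> (LINT s:D|lebesgue. \<nu> s)"
proof -
  let ?V = "voronoi D N t"
  define Z where "Z = (\<Union>n<N. \<Union>m\<in>{..<N} - {n}. {x. dist x (t n) = dist x (t m)})"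
  have "Z \<in> null_sets lebesgue"
    unfolding Z_def using t_inj
    by (intro null_sets.finite_UN null_sets_equidistant) (auto simp: inj_on_def)
  moreover have "(\<Sum>n<N. indicator (?V n) x *\<^sub>R \<nu> x) \<le> indicator D x *\<^sub>R \<nu> x" if "x \<notin> Z" for x
  proof (cases "x \<in> D")
    case True
    have "(\<Sum>n<N. indicator (?V n) x) * \<nu> x \<le> indicator D x * \<nu> x"
      using sum_indicator_voronoi_le[where x = x and N = N and t = t and D = D] that True \<nu>_nonneg
      by (intro mult_right_mono) (auto simp: Z_def)
    then show ?thesis by (simp add: sum_distrib_right)
  next
    case False
    then show ?thesis by (simp add: voronoi_def indicator_def)
  qed
  ultimately have AE: "AE x in lebesgue.
      (\<Sum>n<N. indicator (?V n) x *\<^sub>R \<nu> x) \<le> indicator D x *\<^sub>R \<nu> x"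
    by (auto intro: AE_I')
  have cell_int: "integrable lebesgue (\<lambda>x. indicator (?V n) x *\<^sub>R \<nu> x)" for n
    using set_integrable_subset[OF \<nu>_int voronoi_in_sets_lebesgue[OF D]]
    by (auto simp: set_integrable_def voronoi_def)
  have "(\<Sum>n<N. qweight D \<nu> N t n)
      = integral\<^sup>L lebesgue (\<lambda>x. \<Sum>n<N. indicator (?V n) x *\<^sub>R \<nu> x)"
    unfolding qweight_def set_lebesgue_integral_def
    by (rule Bochner_Integration.integral_sum[symmetric]) (rule cell_int)
  also have "\<dots> \<le> integral\<^sup>L lebesgue (\<lambda>x. indicator D x *\<^sub>R \<nu> x)"
    using \<nu>_int cell_int AE
    by (intro integral_mono_AE Bochner_Integration.integrable_sum) (simp_all add: set_integrable_def)
  finally show ?thesis by (simp add: set_lebesgue_integral_def)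
qed

lemma set_lebesgue_restrict_space:
  fixes f :: "'a::euclidean_space \<Rightarrow> 'b::{banach, second_countable_topology}"
    and g :: "'a \<Rightarrow> 'c::{banach, second_countable_topology}"
  assumes "D \<in> sets lebesgue"
  shows "set_integrable lebesgue D f \<longleftrightarrow> integrable (restrict_space lebesgue D) f"
    and "(LINT s:D|lebesgue. f s) = integral\<^sup>L (restrict_space lebesgue D) f"
    and "set_borel_measurable lebesgue D g \<longleftrightarrow> g \<in> borel_measurable (restrict_space lebesgue D)"
proof -
  have D: "D \<inter> space lebesgue \<in> sets lebesgue" using assms by simp
  show "set_integrable lebesgue D f \<longleftrightarrow> integrable (restrict_space lebesgue D) f"
    by (rule set_integrable_eq[OF D])
  show "(LINT s:D|lebesgue. f s) = integral\<^sup>L (restrict_space lebesgue D) f"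
    by (simp add: set_lebesgue_integral_def integral_restrict_space[OF D])
  show "set_borel_measurable lebesgue D g \<longleftrightarrow> g \<in> borel_measurable (restrict_space lebesgue D)"
    by (simp add: set_borel_measurable_def borel_measurable_restrict_space_iff[OF D])
qed

lemma integrable_weighted_product:
  fixes f g :: "'a \<Rightarrow> complex"
  assumes [measurable]: "\<nu> \<in> borel_measurable M" "f \<in> borel_measurable M" "g \<in> borel_measurable M"
    and f: "integrable M (\<lambda>s. \<nu> s * (cmod (f s))\<^sup>2)" and g: "integrable M (\<lambda>s. \<nu> s * (cmod (g s))\<^sup>2)"
    and \<nu>_nonneg: "\<forall>s\<in>space M. 0 \<le> \<nu> s"
  shows "integrable M (\<lambda>s. complex_of_real (\<nu> s) * (f s * cnj (g s)))"
proof (rule Bochner_Integration.integrable_bound)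
  show "integrable M (\<lambda>s. \<nu> s * (cmod (f s))\<^sup>2 + \<nu> s * (cmod (g s))\<^sup>2)"
    using f g by simp
  have [measurable]: "(\<lambda>s. cnj (g s)) \<in> borel_measurable M"
    by (rule borel_measurable_continuous_on[OF _ assms(3)]) (intro continuous_intros)
  show "(\<lambda>s. complex_of_real (\<nu> s) * (f s * cnj (g s))) \<in> borel_measurable M"
    by measurable
  show "AE s in M. norm (complex_of_real (\<nu> s) * (f s * cnj (g s)))
      \<le> norm (\<nu> s * (cmod (f s))\<^sup>2 + \<nu> s * (cmod (g s))\<^sup>2)"
  proof (rule AE_I2)
    fix s assume "s \<in> space M"
    then have \<nu>: "0 \<le> \<nu> s" using \<nu>_nonneg by simp
    have "cmod (f s) * cmod (g s) \<le> (cmod (f s))\<^sup>2 + (cmod (g s))\<^sup>2"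
      using sum_squares_bound[of "cmod (f s)" "cmod (g s)"]
        mult_nonneg_nonneg[OF norm_ge_zero norm_ge_zero, of "f s" "g s"]
      by linarith
    then have "\<nu> s * (cmod (f s) * cmod (g s)) \<le> \<nu> s * ((cmod (f s))\<^sup>2 + (cmod (g s))\<^sup>2)"
      using \<nu> by (rule mult_left_mono)
    then show "norm (complex_of_real (\<nu> s) * (f s * cnj (g s)))
        \<le> norm (\<nu> s * (cmod (f s))\<^sup>2 + \<nu> s * (cmod (g s))\<^sup>2)"
      using \<nu> by (simp add: norm_mult distrib_left)
  qed
qed

lemma orthonormal_sum_nu_norm:
  fixes D :: "'a::euclidean_space set" and \<phi> :: "nat \<Rightarrow> 'a \<Rightarrow> complex" and c :: "nat \<Rightarrow> complex"
  assumes D: "D \<in> sets lebesgue" and \<nu>_nonneg: "\<forall>s\<in>D. 0 \<le> \<nu> s"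
    and \<nu>_int: "set_integrable lebesgue D \<nu>" and \<phi>_L2: "\<forall>i. \<phi> i \<in> L2nu D \<nu>"
    and orth: "\<forall>i j. nu_inner D \<nu> (\<phi> i) (\<phi> j) = (if i = j then 1 else 0)"
  shows "set_integrable lebesgue D (\<lambda>s. \<nu> s * (cmod (\<Sum>i<K. c i * \<phi> i s))\<^sup>2)"
    and "(LINT s:D|lebesgue. \<nu> s * (cmod (\<Sum>i<K. c i * \<phi> i s))\<^sup>2) = (\<Sum>i<K. (cmod (c i))\<^sup>2)"
proof -
  define M where "M = restrict_space lebesgue D"
  note R = set_lebesgue_restrict_space[OF D, folded M_def]
  have \<nu>_meas[measurable]: "\<nu> \<in> borel_measurable M"
    using R(1) \<nu>_int borel_measurable_integrable by blast
  have \<phi>_meas[measurable]: "\<phi> i \<in> borel_measurable M" for i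
    using \<phi>_L2 by (intro R(3)[THEN iffD1]) (simp add: L2nu_def)
  define F where "F i j s = complex_of_real (\<nu> s) * (\<phi> i s * cnj (\<phi> j s))" for i j s
  have "integrable M (\<lambda>s. \<nu> s * (cmod (\<phi> i s))\<^sup>2)" for i
    using \<phi>_L2 by (intro R(1)[THEN iffD1]) (simp add: L2nu_def)
  then have F_int: "integrable M (F i j)" for i j
    unfolding F_def using \<nu>_nonneg \<nu>_meas \<phi>_meas
    by (intro integrable_weighted_product) (auto simp: M_def)
  have F_integral: "integral\<^sup>L M (F i j) = (if i = j then 1 else 0)" for i j
    using orth unfolding F_def R(2)[symmetric] nu_inner_def by simp
  have gram: "complex_of_real (\<nu> s * (cmod (\<Sum>i<K. c i * \<phi> i s))\<^sup>2)
      = (\<Sum>i<K. \<Sum>j<K. (c i * cnj (c j)) * F i j s)" for s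
  proof -
    have "complex_of_real (\<nu> s * (cmod (\<Sum>i<K. c i * \<phi> i s))\<^sup>2)
        = complex_of_real (\<nu> s) * ((\<Sum>i<K. c i * \<phi> i s) * cnj (\<Sum>j<K. c j * \<phi> j s))"
      by (simp only: of_real_mult complex_norm_square)
    also have "\<dots> = (\<Sum>i<K. \<Sum>j<K. (c i * cnj (c j)) * F i j s)"
      by (simp add: F_def cnj_sum sum_product sum_distrib_left mult_ac) (rule sum.swap)
    finally show ?thesis .
  qed
  have "integrable M (\<lambda>s. complex_of_real (\<nu> s * (cmod (\<Sum>i<K. c i * \<phi> i s))\<^sup>2))"
    unfolding gram using F_int by simp
  then have p_int: "integrable M (\<lambda>s. \<nu> s * (cmod (\<Sum>i<K. c i * \<phi> i s))\<^sup>2)"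
    by (rule complex_of_real_integrable_eq[THEN iffD1])
  then show "set_integrable lebesgue D (\<lambda>s. \<nu> s * (cmod (\<Sum>i<K. c i * \<phi> i s))\<^sup>2)"
    by (rule R(1)[THEN iffD2])
  have "complex_of_real (integral\<^sup>L M (\<lambda>s. \<nu> s * (cmod (\<Sum>i<K. c i * \<phi> i s))\<^sup>2))
      = (\<Sum>i<K. c i * cnj (c i))"
    unfolding integral_complex_of_real[symmetric] gram using F_int
    by (simp add: F_integral if_distrib cong: if_cong)
  also have "\<dots> = complex_of_real (\<Sum>i<K. (cmod (c i))\<^sup>2)"
    unfolding of_real_sum by (intro sum.cong) (simp_all only: complex_norm_square)
  finally show "(LINT s:D|lebesgue. \<nu> s * (cmod (\<Sum>i<K. c i * \<phi> i s))\<^sup>2) = (\<Sum>i<K. (cmod (c i))\<^sup>2)"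
    unfolding R(2) by (simp only: of_real_eq_iff)
qed

lemma nu_norm_sq_le_add_uniform:
  fixes D :: "'a::euclidean_space set" and g p :: "'a \<Rightarrow> complex"
  assumes D: "D \<in> sets lebesgue" and \<nu>_nonneg: "\<forall>s\<in>D. 0 \<le> \<nu> s"
    and \<nu>_int: "set_integrable lebesgue D \<nu>" and \<nu>_one: "(LINT s:D|lebesgue. \<nu> s) = 1"
    and g: "g \<in> L2nu D \<nu>" and p_int: "set_integrable lebesgue D (\<lambda>s. \<nu> s * (cmod (p s))\<^sup>2)"
    and err: "\<forall>s\<in>D. cmod (g s - p s) \<le> e" and e: "0 \<le> e"
  shows "(LINT s:D|lebesgue. \<nu> s * (cmod (p s))\<^sup>2) \<le> (nu_norm D \<nu> g + e)\<^sup>2"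
proof -
  define M where "M = restrict_space lebesgue D"
  note R = set_lebesgue_restrict_space[OF D, folded M_def]
  have space_M: "space M = D" by (simp add: M_def)
  have \<nu>_int': "integrable M \<nu>" and p_int': "integrable M (\<lambda>s. \<nu> s * (cmod (p s))\<^sup>2)"
    using \<nu>_int p_int by (simp_all add: R(1))
  have g_int: "integrable M (\<lambda>s. \<nu> s * (cmod (g s))\<^sup>2)"
    using g by (intro R(1)[THEN iffD1]) (simp add: L2nu_def)
  define A2 where "A2 = integral\<^sup>L M (\<lambda>s. \<nu> s * (cmod (g s))\<^sup>2)"
  have A2: "0 \<le> A2"
    unfolding A2_def using \<nu>_nonneg space_M by (intro integral_nonneg_AE AE_I2) auto
  have "integral\<^sup>L M (\<lambda>s. \<nu> s * (cmod (p s))\<^sup>2) \<le> (1 + l) * (sqrt A2)\<^sup>2 + (1 + 1 / l) * e\<^sup>2"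
    if l: "l > 0" for l
  proof -
    have "\<nu> s * (cmod (p s))\<^sup>2 \<le> (1 + l) * (\<nu> s * (cmod (g s))\<^sup>2) + ((1 + 1 / l) * e\<^sup>2) * \<nu> s"
      if s: "s \<in> space M" for s
    proof -
      have "(cmod (p s))\<^sup>2 \<le> (1 + l) * (cmod (g s))\<^sup>2 + (1 + 1 / l) * (cmod (g s - p s))\<^sup>2"
        using power2_norm_diff_le_weighted[OF l, of "g s" "g s - p s"] by simp
      also have "\<dots> \<le> (1 + l) * (cmod (g s))\<^sup>2 + (1 + 1 / l) * e\<^sup>2"
        using err s space_M l by (intro add_left_mono mult_left_mono power_mono) auto
      finally show ?thesis
        using \<nu>_nonneg s space_M mult_left_mono by (fastforce simp: algebra_simps)
    qed
    then have "integral\<^sup>L M (\<lambda>s. \<nu> s * (cmod (p s))\<^sup>2)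
        \<le> integral\<^sup>L M (\<lambda>s. (1 + l) * (\<nu> s * (cmod (g s))\<^sup>2) + ((1 + 1 / l) * e\<^sup>2) * \<nu> s)"
      using p_int' g_int \<nu>_int' by (intro integral_mono) auto
    also have "\<dots> = (1 + l) * A2 + (1 + 1 / l) * e\<^sup>2"
      using g_int \<nu>_int' \<nu>_one by (simp add: A2_def R(2))
    finally show ?thesis using A2 by simp
  qed
  then have "integral\<^sup>L M (\<lambda>s. \<nu> s * (cmod (p s))\<^sup>2) \<le> (sqrt A2 + e)\<^sup>2"
    using A2 e by (intro le_power2_add_if_weighted_bounds) auto
  moreover have "nu_norm D \<nu> g = sqrt A2"
    unfolding nu_norm_def A2_def R(2) ..
  ultimately show ?thesis unfolding R(2) by simp
qed

lemma ratio_le_adj_norm: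
  fixes D :: "'a::euclidean_space set" and \<nu> :: "'a \<Rightarrow> real"
    and \<phi> :: "nat \<Rightarrow> 'a \<Rightarrow> complex" and t :: "nat \<Rightarrow> 'a" and N K :: nat
  assumes D: "D \<in> sets lebesgue"
    and \<nu>_nonneg: "\<forall>s\<in>D. 0 \<le> \<nu> s" and \<nu>_int: "set_integrable lebesgue D \<nu>"
    and \<nu>_one: "(LINT s:D|lebesgue. \<nu> s) = 1"
    and \<phi>_L2: "\<forall>i. \<phi> i \<in> L2nu D \<nu>"
    and orth: "\<forall>i j. nu_inner D \<nu> (\<phi> i) (\<phi> j) = (if i = j then 1 else 0)"
    and t_inj: "inj_on t {..<N}" and t_closure: "\<forall>n<N. t n \<in> closure D"
    and \<tau>_pos: "\<forall>n<N. 0 < qweight D \<nu> N t n"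
    and y: "y \<in> unit_sphere N" and g: "g \<in> Gset D \<nu> N t y"
    and p: "p \<in> PhiK \<phi> K" and p_nonzero: "p \<noteq> (\<lambda>_. 0)"
    and bdd: "bdd_above ((\<lambda>s. cmod (g s - p s)) ` closure D)"
  shows "ratio D \<nu> g p \<le> adj_norm D \<nu> N t \<phi> K y"
proof -
  define e where "e = unorm (closure D) (\<lambda>s. g s - p s)"
  obtain c where p_def: "p = (\<lambda>s. \<Sum>i<K. c i * \<phi> i s)"
    using p by (auto simp: PhiK_def)
  define C where "C = L2_set (\<lambda>i. cmod (c i)) {..<K}"
  have err: "cmod (g s - p s) \<le> e" if "s \<in> closure D" for s
    unfolding e_def unorm_def using bdd that by (rule cSUP_upper2) simp
  have y1: "(\<Sum>n<N. (cmod (y n))\<^sup>2) = 1"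
    using y by (simp add: unit_sphere_def)
  then have "N \<noteq> 0" by (rule contrapos_pn) simp
  then have e: "0 \<le> e"
    using err[of "t 0"] t_closure by (meson norm_ge_zero order_trans not_gr_zero)
  have "1 - e \<le> adj_norm D \<nu> N t \<phi> K y * C"
    unfolding adj_norm_def Umat_def C_def
  proof (rule sampled_adjoint_lower_bound[where g = "\<lambda>n. g (t n)" and b = "\<lambda>i n. \<phi> i (t n)"])
    show "(\<Sum>n<N. qweight D \<nu> N t n) \<le> 1"
      using sum_qweight_le[OF D \<nu>_nonneg \<nu>_int t_inj] \<nu>_one by simp
    show "\<forall>n<N. cmod (g (t n) - (\<Sum>i<K. c i * \<phi> i (t n))) \<le> e"
      using err t_closure by (simp add: p_def)
  qed (use y1 \<tau>_pos g e in \<open>auto simp: Gset_def\<close>)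
  moreover have "C \<le> nu_norm D \<nu> g + e"
  proof -
    note Parseval = orthonormal_sum_nu_norm[OF D \<nu>_nonneg \<nu>_int \<phi>_L2 orth, of c K]
    have "C\<^sup>2 \<le> (nu_norm D \<nu> g + e)\<^sup>2"
      using nu_norm_sq_le_add_uniform[OF D \<nu>_nonneg \<nu>_int \<nu>_one _ Parseval(1), of g e]
        g err e closure_subset
      by (auto simp: Parseval(2) C_def L2_set_def sum_nonneg Gset_def p_def)
    moreover have "0 \<le> nu_norm D \<nu> g"
      unfolding nu_norm_def set_lebesgue_integral_def using \<nu>_nonneg
      by (intro real_sqrt_ge_zero integral_nonneg_AE AE_I2) (auto simp: indicator_def)
    ultimately show ?thesis using e by (simp add: power2_le_iff_abs_le)
  qed
  moreover have "0 < C"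
  proof -
    have "\<exists>i<K. c i \<noteq> 0"
      using p_nonzero by (auto simp: p_def)
    then obtain i where "i < K" "c i \<noteq> 0" by blast
    then show ?thesis
      by (auto simp: C_def L2_set_def intro!: sum_pos2[where i = i])
  qed
  moreover have "0 \<le> adj_norm D \<nu> N t \<phi> K y"
    by (simp add: adj_norm_def sum_nonneg)
  ultimately have "(1 - e) / (nu_norm D \<nu> g + e) \<le> adj_norm D \<nu> N t \<phi> K y"
    by (simp add: pos_divide_le_eq order_trans mult_left_mono)
  then show ?thesis by (simp add: ratio_def e_def)
qed

theorem lemma6p2:
  fixes D :: "'a::euclidean_space set" and \<nu> :: "'a \<Rightarrow> real"
    and \<phi> :: "nat \<Rightarrow> 'a \<Rightarrow> complex" and t :: "nat \<Rightarrow> 'a" and N K :: nat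
  assumes "open D" and "connected D"
    and "\<forall>s\<in>D. \<nu> s \<ge> 0" and "set_integrable lebesgue D \<nu>" and "(LINT s:D|lebesgue. \<nu> s) = 1"
    and "\<forall>i. \<phi> i \<in> L2nu D \<nu> \<and> \<phi> i \<in> Linf D"
    and "\<forall>i j. nu_inner D \<nu> (\<phi> i) (\<phi> j) = (if i = j then 1 else 0)"
    and "inj_on t {..<N}" and "\<forall>n<N. t n \<in> closure D"
    and "\<forall>n<N. qweight D \<nu> N t n > 0"
  shows "sigma_min D \<nu> N t \<phi> K \<ge>
    (INF y\<in>unit_sphere N. SUP g\<in>Gset D \<nu> N t y.
       SUP p\<in>{p \<in> PhiK \<phi> K. p \<noteq> (\<lambda>_. 0) \<and> bdd_above ((\<lambda>s. cmod (g s - p s)) ` closure D)}.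
         ereal (ratio D \<nu> g p))"
  unfolding sigma_min_def
proof (intro INF_mono bexI SUP_least)
  fix y g p
  assume "y \<in> unit_sphere N" and "g \<in> Gset D \<nu> N t y"
    and "p \<in> {p \<in> PhiK \<phi> K. p \<noteq> (\<lambda>_. 0) \<and> bdd_above ((\<lambda>s. cmod (g s - p s)) ` closure D)}"
  moreover have "D \<in> sets lebesgue"
    using \<open>open D\<close> by (simp add: sets_completionI_sets)
  ultimately show "ereal (ratio D \<nu> g p) \<le> ereal (adj_norm D \<nu> N t \<phi> K y)"
    using assms by (auto intro: ratio_le_adj_norm)
qed

end
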